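(* Let $U_0>0$, $\omega_f\in\mathbb{R}$ and $h$ the Heaviside function. Consider $v_x'(x,y,z,t) = h(t)\int_0^t \sin[x+y+z-U_0(t-\tau)]\sin\omega_f\tau\,d\tau$, $v_y' = 0$, $v_z'(x,y,z,t) = -h(t)\int_0^t\sin[x+y+z-U_0(t-\tau)]\sin\omega_f\tau\,d\tau$, $p'=0$ (the pointwise solution of the forced linearized Euler system given by Duhamel's formula with $f_1=f_2=f_3=0$, $f_4(\xi)=\sin\xi$, $k_4=l_4=m_4=1$). Then there is no function $\Phi(x,y,z,t)$ with $v_x' = \partial\Phi/\partial x$, $v_y' = \partial\Phi/\partial y$, $v_z' = \partial\Phi/\partial z$, i.e. no velocity potential exists for this solution.
   Context: The forced linearized Euler system is $\partial_t v_x' + U_0\partial_x v_x' + \frac1{\rho_0}\partial_x p' = h(t)F\sin\omega_f t$, $\partial_t v_y' + U_0\partial_x v_y' + \frac1{\rho_0}\partial_y p' = h(t)G\sin\omega_f t$, $\partial_t v_z' + U_0\partial_x v_z' + \frac1{\rho_0}\partial_z p' = h(t)H\sin\omega_f t$, $\partial_t p' + U_0\partial_xp' + \rho_0c_0^2(\partial_xv_x'+\partial_yv_y'+\partial_zv_z') = h(t)P\sin\omega_f t$; here $F = \sin(x+y+z)$, $G=0$, $H=-\sin(x+y+z)$, $P=0$. *)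

theory Defs
  imports "HOL-Analysis.Analysis"
begin

definition heaviside :: "real \<Rightarrow> real" where
  "heaviside t = (if t \<ge> 0 then 1 else 0)"

definition duhamel_I :: "real \<Rightarrow> real \<Rightarrow> real \<Rightarrow> real \<Rightarrow> real \<Rightarrow> real \<Rightarrow> real" where
  "duhamel_I U0 omf x y z t =
     heaviside t * integral {0..t} (\<lambda>\<tau>. sin (x + y + z - U0 * (t - \<tau>)) * sin (omf * \<tau>))"

definition vx' :: "real \<Rightarrow> real \<Rightarrow> real \<Rightarrow> real \<Rightarrow> real \<Rightarrow> real \<Rightarrow> real" where
  "vx' U0 omf x y z t = duhamel_I U0 omf x y z t"

definition vy' :: "real \<Rightarrow> real \<Rightarrow> real \<Rightarrow> real \<Rightarrow> real \<Rightarrow> real \<Rightarrow> real" where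
  "vy' U0 omf x y z t = 0"

definition vz' :: "real \<Rightarrow> real \<Rightarrow> real \<Rightarrow> real \<Rightarrow> real \<Rightarrow> real \<Rightarrow> real" where
  "vz' U0 omf x y z t = - duhamel_I U0 omf x y z t"

end

theory Submission
  imports Defs
begin

text \<open>A potential \<Phi> with \<open>\<partial>\<Phi>/\<partial>y = 0\<close> does not depend on y, so neither does
  \<open>v\<^sub>x' = \<partial>\<Phi>/\<partial>x\<close>. But \<open>v\<^sub>x'\<close> depends on \<open>x + y + z\<close> only through a factor
  \<open>sin (x + y + z - \<dots>)\<close>, which changes sign under \<open>y \<mapsto> y + \<pi>\<close>; a quantity that is
  both invariant and odd under this shift vanishes. At \<open>x = z = 0\<close>, \<open>y = U\<^sub>0 t\<close> the
  Duhamel integral becomes \<open>\<integral>\<^sub>0\<^sup>t sin (U\<^sub>0 \<tau>) sin (\<omega>\<^sub>f \<tau>) d\<tau>\<close>, whose integrand has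
  constant non-zero sign for small \<open>t > 0\<close>.\<close>

lemma partial_deriv_indep_of_trivial_variable:
  fixes F :: "real \<Rightarrow> real \<Rightarrow> real"
  assumes const: "\<And>a b. ((\<lambda>b. F a b) has_real_derivative 0) (at b)"
    and deriv: "\<And>a b. ((\<lambda>a. F a b) has_real_derivative g a b) (at a)"
  shows "g a b = g a b'"
proof -
  have "F a' b = F a' b'" for a'
    using const[of a'] by (intro DERIV_isconst_all allI)
  then have "((\<lambda>a. F a b) has_real_derivative g a b') (at a)"
    using deriv[where a=a and b=b'] by simp
  then show ?thesis
    using deriv[where a=a and b=b] DERIV_unique by blast
qed

lemma duhamel_I_shift_pi:
  "duhamel_I U0 omf x (y + pi) z t = - duhamel_I U0 omf x y z t"
proof -
  have "sin (x + (y + pi) + z - U0 * (t - \<tau>)) = - sin (x + y + z - U0 * (t - \<tau>))" for \<tau>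
    using sin_periodic_pi[of "x + y + z - U0 * (t - \<tau>)"] by (simp add: algebra_simps)
  then show ?thesis
    unfolding duhamel_I_def by (simp add: integral_neg)
qed

lemma duhamel_I_along_characteristic:
  assumes "0 \<le> t"
  shows "duhamel_I U0 omf 0 (U0 * t) 0 t = integral {0..t} (\<lambda>\<tau>. sin (U0 * \<tau>) * sin (omf * \<tau>))"
  using assms by (simp add: duhamel_I_def heaviside_def algebra_simps)

lemma integral_sin_mult_sin_pos:
  fixes a b t :: real
  assumes "0 < a" "0 < b" "0 < t" "a * t \<le> pi" "b * t \<le> pi"
  shows "0 < integral {0..t} (\<lambda>\<tau>. sin (a * \<tau>) * sin (b * \<tau>))"
proof -
  have sin_nonneg: "0 \<le> sin (c * \<tau>)" if "0 < c" "c * t \<le> pi" "\<tau> \<in> {0..t}" for c \<tau>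
  proof (rule sin_ge_zero)
    have "c * \<tau> \<le> c * t"
      using that by (intro mult_left_mono) auto
    then show "c * \<tau> \<le> pi"
      using that by linarith
  qed (use that in auto)
  have sin_pos: "0 < sin (c * (t / 2))" if "0 < c" "c * t \<le> pi" for c
  proof (rule sin_gt_zero)
    have "c * (t / 2) = c * t / 2"
      by simp
    then show "c * (t / 2) < pi"
      using that pi_gt_zero by linarith
  qed (use that \<open>0 < t\<close> in simp)
  have cont: "continuous_on {0..t} (\<lambda>\<tau>. sin (a * \<tau>) * sin (b * \<tau>))"
    by (intro continuous_intros)
  have nonneg: "\<And>\<tau>. \<tau> \<in> {0..t} \<Longrightarrow> 0 \<le> sin (a * \<tau>) * sin (b * \<tau>)"
    using sin_nonneg assms by simp
  have "sin (a * (t / 2)) * sin (b * (t / 2)) \<noteq> 0"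
    using sin_pos[of a] sin_pos[of b] assms by simp
  then have "integral {0..t} (\<lambda>\<tau>. sin (a * \<tau>) * sin (b * \<tau>)) \<noteq> 0"
    using integral_eq_0_iff[OF cont \<open>0 < t\<close> nonneg] \<open>0 < t\<close> by fastforce
  then show ?thesis
    using integral_nonneg[OF integrable_continuous_real[OF cont] nonneg] by simp
qed

lemma integral_sin_mult_sin_neq_0:
  fixes a b t :: real
  assumes "0 < a" "b \<noteq> 0" "0 < t" "a * t \<le> pi" "\<bar>b\<bar> * t \<le> pi"
  shows "integral {0..t} (\<lambda>\<tau>. sin (a * \<tau>) * sin (b * \<tau>)) \<noteq> 0"
proof (cases "0 < b")
  case True
  then show ?thesis
    using integral_sin_mult_sin_pos[of a b t] assms by simp
next
  case False
  then have "0 < integral {0..t} (\<lambda>\<tau>. sin (a * \<tau>) * sin (- b * \<tau>))"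
    using integral_sin_mult_sin_pos[of a "- b" t] assms by simp
  then show ?thesis
    by (simp add: integral_neg)
qed

theorem proposition8:
  fixes U0 omf :: real
  assumes "U0 > 0" and "omf \<noteq> 0"
  shows "\<not> (\<exists>\<Phi> :: real \<Rightarrow> real \<Rightarrow> real \<Rightarrow> real \<Rightarrow> real.
            \<forall>x y z t.
              ((\<lambda>a. \<Phi> a y z t) has_real_derivative vx' U0 omf x y z t) (at x) \<and>
              ((\<lambda>b. \<Phi> x b z t) has_real_derivative vy' U0 omf x y z t) (at y) \<and>
              ((\<lambda>c. \<Phi> x y c t) has_real_derivative vz' U0 omf x y z t) (at z))"
proof
  assume "\<exists>\<Phi> :: real \<Rightarrow> real \<Rightarrow> real \<Rightarrow> real \<Rightarrow> real.
            \<forall>x y z t.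
              ((\<lambda>a. \<Phi> a y z t) has_real_derivative vx' U0 omf x y z t) (at x) \<and>
              ((\<lambda>b. \<Phi> x b z t) has_real_derivative vy' U0 omf x y z t) (at y) \<and>
              ((\<lambda>c. \<Phi> x y c t) has_real_derivative vz' U0 omf x y z t) (at z)"
  then obtain \<Phi> :: "real \<Rightarrow> real \<Rightarrow> real \<Rightarrow> real \<Rightarrow> real" where
    dx: "\<And>x y z t. ((\<lambda>a. \<Phi> a y z t) has_real_derivative vx' U0 omf x y z t) (at x)" and
    dy: "\<And>x y z t. ((\<lambda>b. \<Phi> x b z t) has_real_derivative vy' U0 omf x y z t) (at y)"
    by blast
  have indep: "duhamel_I U0 omf x y z t = duhamel_I U0 omf x y' z t" for x y y' z t
    using partial_deriv_indep_of_trivial_variable[of "\<lambda>a b. \<Phi> a b z t" "\<lambda>a b. vx' U0 omf a b z t"]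
      dx dy by (simp add: vx'_def vy'_def)
  have vanish: "duhamel_I U0 omf 0 y 0 t = 0" for y t
    using indep[of 0 "y + pi" 0 t y] duhamel_I_shift_pi[of U0 omf 0 y 0 t] by simp
  define t where "t = pi / (U0 + \<bar>omf\<bar>)"
  have "0 < t" "U0 * t \<le> pi" "\<bar>omf\<bar> * t \<le> pi"
    using assms by (simp_all add: t_def field_simps)
  then have "duhamel_I U0 omf 0 (U0 * t) 0 t \<noteq> 0"
    using duhamel_I_along_characteristic integral_sin_mult_sin_neq_0 assms by simp
  then show False
    using vanish by blast
qed

end
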